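(* Let $\mathcal{P}$ be a probability distribution on $\mathbb{R}^d$ such that $d$ points chosen independently from $\mathcal{P}$ are almost surely affinely independent. For integers $m \ge 0$ and $k \ge 0$, let $s_k(m)$ denote the expected number of $k$-sets of a set of $m$ points chosen independently from $\mathcal{P}$. Then for every positive integer $n$, $$s_0(n) \ge s_0(n-1) + \frac{d\, s_0(n) - s_1(n)}{n},$$ and for every integer $1 \le r \le n$, $$s_0(r) \ge \frac{\binom{n-d}{r-d}}{\binom{n}{r}}\, s_0(n) + \frac{\binom{n-d-1}{r-d}}{\binom{n}{r}}\, s_1(n).$$
   Context: Let $S$ be a finite set of points in $\mathbb{R}^d$ and $k \ge 0$ an integer. A $k$-set of $S$ is a subset $\{p_1,\dots,p_d\} \subseteq S$ of $d$ points spanning a hyperplane that bounds an open halfspace containing exactly $k$ points of $S$; the $k$-set is said to cut off these $k$ points. The number $s_k(S)$ of $k$-sets of $S$ counts such $d$-subsets together with the open halfspace: if both open halfspaces bounded by the hyperplane contain exactly $k$ points of $S$, the $k$-set is counted twice. In particular $0$-sets are the facets of the convex hull of $S$. Binomial coefficients $\binom{a}{b}$ with $b<0$ or $b>a$ are zero. *)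

theory Defs
  imports "HOL-Probability.Probability"
begin

definition ibinom :: "int \<Rightarrow> int \<Rightarrow> nat" where
  "ibinom a b = (if 0 \<le> b \<and> b \<le> a then nat a choose nat b else 0)"

definition open_halfspaces_through :: "(nat \<Rightarrow> 'a::euclidean_space) \<Rightarrow> nat set \<Rightarrow> 'a set set" where
  "open_halfspaces_through x I =
     {{y. a \<bullet> y > b} | a b. a \<noteq> 0 \<and> (\<forall>i\<in>I. a \<bullet> x i = b)}"

definition spanning_dsubset :: "(nat \<Rightarrow> 'a::euclidean_space) \<Rightarrow> nat \<Rightarrow> nat set \<Rightarrow> bool" where
  "spanning_dsubset x m I \<longleftrightarrow> I \<subseteq> {..<m} \<and> card I = DIM('a) \<and> inj_on x I
      \<and> \<not> affine_dependent (x ` I)"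

definition num_ksets :: "nat \<Rightarrow> nat \<Rightarrow> (nat \<Rightarrow> 'a::euclidean_space) \<Rightarrow> nat" where
  "num_ksets k m x =
     (\<Sum>I\<in>{I. spanning_dsubset x m I}.
        card {h \<in> open_halfspaces_through x I. card {j\<in>{..<m}. x j \<in> h} = k})"

definition expected_ksets :: "'a::euclidean_space measure \<Rightarrow> nat \<Rightarrow> nat \<Rightarrow> real" where
  "expected_ksets P k m =
     (\<integral>x. real (num_ksets k m x) \<partial>(PiM {..<m} (\<lambda>_. P)))"

end

theory Submission
  imports Defs
begin

text \<open>
  Both inequalities come from double counting. A pair (I, h) of a spanning d-subset I of the
  n points and an open halfspace h bounded by its hyperplane, with h containing c of the points,
  is a 0-set of exactly those r-subsets that contain I and avoid the c points of h; there are
  binom(n - d - c, r - d) of them. Summing the number of 0-sets over all r-subsets therefore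
  dominates binom(n - d, r - d) times the number of 0-sets plus binom(n - d - 1, r - d) times the
  number of 1-sets of the whole family, and for r = n - 1 only c <= 1 contributes, so the count is
  exact. Taking expectations, each r-subset of n independent points is distributed like r
  independent points, which turns the counts into binom(n, r) s_0(r).
\<close>

section \<open>Gram-Schmidt orthogonalisation\<close>

text \<open>Summands with w i = 0 vanish because x / 0 = 0, which is what makes this the orthogonal
  projection even when the Gram-Schmidt family below contains zero vectors.\<close>
definition proj_onto :: "(nat \<Rightarrow> 'a::real_inner) \<Rightarrow> nat \<Rightarrow> 'a \<Rightarrow> 'a" where
  "proj_onto w L u = (\<Sum>i<L. ((u \<bullet> w i) / (w i \<bullet> w i)) *\<^sub>R w i)"

lemma proj_onto_in_span: "proj_onto w L u \<in> span (w ` {..<L})"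
  unfolding proj_onto_def by (intro span_sum span_scale span_base) auto

lemma inner_proj_residual_eq_0:
  fixes w :: "nat \<Rightarrow> 'a::real_inner"
  assumes orth: "\<And>i j. i < L \<Longrightarrow> j < L \<Longrightarrow> i \<noteq> j \<Longrightarrow> w i \<bullet> w j = 0" and j: "j < L"
  shows "(u - proj_onto w L u) \<bullet> w j = 0"
proof -
  have "proj_onto w L u \<bullet> w j = (\<Sum>i<L. ((u \<bullet> w i) / (w i \<bullet> w i)) * (w i \<bullet> w j))"
    by (simp add: proj_onto_def inner_sum_left)
  also have "\<dots> = (\<Sum>i<L. if i = j then ((u \<bullet> w j) / (w j \<bullet> w j)) * (w j \<bullet> w j) else 0)"
    by (rule sum.cong) (auto simp: orth j)
  also have "\<dots> = ((u \<bullet> w j) / (w j \<bullet> w j)) * (w j \<bullet> w j)"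
    using j by simp
  also have "\<dots> = u \<bullet> w j"
    by (cases "w j = 0") auto
  finally show ?thesis by (simp add: inner_diff_left)
qed

function gram_schmidt :: "(nat \<Rightarrow> 'a::real_inner) \<Rightarrow> nat \<Rightarrow> 'a" where
  "gram_schmidt v l =
     v l - (\<Sum>j<l. ((v l \<bullet> gram_schmidt v j) / (gram_schmidt v j \<bullet> gram_schmidt v j)) *\<^sub>R gram_schmidt v j)"
  by auto
termination by (relation "Wellfounded.measure snd") auto

declare gram_schmidt.simps [simp del]

lemma gram_schmidt_eq: "gram_schmidt v l = v l - proj_onto (gram_schmidt v) l (v l)"
  unfolding proj_onto_def by (rule gram_schmidt.simps)

lemma gram_schmidt_orthogonal:
  assumes "i \<noteq> j"
  shows "gram_schmidt v i \<bullet> gram_schmidt v j = 0"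
proof -
  have "\<forall>j<i. gram_schmidt v i \<bullet> gram_schmidt v j = 0" for i
  proof (induction i rule: less_induct)
    case (less i)
    have "gram_schmidt v a \<bullet> gram_schmidt v c = 0" if "a < i" "c < i" "a \<noteq> c" for a c
      using less that by (metis inner_commute linorder_neq_iff)
    then show ?case
      by (metis gram_schmidt_eq inner_proj_residual_eq_0)
  qed
  then show ?thesis
    using assms by (metis inner_commute linorder_neq_iff)
qed

lemma span_insert_diff:
  assumes "p \<in> span S"
  shows "span (insert (a - p) S) = span (insert a S)"
proof -
  have "x - k *\<^sub>R (a - p) \<in> span S \<longleftrightarrow> x - k *\<^sub>R a \<in> span S" for x k
  proof -
    have "x - k *\<^sub>R (a - p) = (x - k *\<^sub>R a) + k *\<^sub>R p"
      by (simp add: algebra_simps)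
    then show ?thesis
      using span_scale[OF assms, of k] span_add span_diff by (metis add_diff_cancel)
  qed
  then show ?thesis
    by (simp add: span_insert)
qed

lemma span_gram_schmidt: "span (gram_schmidt v ` {..<l}) = span (v ` {..<l})"
proof (induction l)
  case (Suc l)
  have "span (gram_schmidt v ` {..<Suc l}) = span (insert (gram_schmidt v l) (gram_schmidt v ` {..<l}))"
    by (simp add: lessThan_Suc)
  also have "\<dots> = span (insert (v l) (gram_schmidt v ` {..<l}))"
    unfolding gram_schmidt_eq[of v l] by (rule span_insert_diff) (rule proj_onto_in_span)
  also have "\<dots> = span (insert (v l) (v ` {..<l}))"
    using Suc.IH by (simp add: span_insert)
  finally show ?case by (simp add: lessThan_Suc)
qed simp

lemma gram_schmidt_eq_0_iff: "gram_schmidt v l = 0 \<longleftrightarrow> v l \<in> span (v ` {..<l})"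
proof
  assume "gram_schmidt v l = 0"
  then show "v l \<in> span (v ` {..<l})"
    using proj_onto_in_span[of "gram_schmidt v" l "v l"] gram_schmidt_eq[of v l]
    by (simp add: span_gram_schmidt)
next
  assume "v l \<in> span (v ` {..<l})"
  then have "gram_schmidt v l \<in> span (gram_schmidt v ` {..<l})"
    using proj_onto_in_span[of "gram_schmidt v" l "v l"]
    by (subst gram_schmidt_eq) (simp add: span_gram_schmidt span_diff)
  moreover have "orthogonal (gram_schmidt v l) y" if "y \<in> gram_schmidt v ` {..<l}" for y
    using that by (auto simp: orthogonal_def gram_schmidt_orthogonal)
  ultimately show "gram_schmidt v l = 0"
    by (meson orthogonal_self orthogonal_to_span)
qed

lemma independent_iff_not_in_span_prefix:
  fixes v :: "nat \<Rightarrow> 'a::real_vector"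
  assumes "inj_on v {..<L}"
  shows "independent (v ` {..<L}) \<longleftrightarrow> (\<forall>l<L. v l \<notin> span (v ` {..<l}))"
  using assms
proof (induction L)
  case (Suc L)
  then have "v L \<notin> v ` {..<L}"
    by (auto dest: inj_onD)
  then have "independent (v ` {..<Suc L}) \<longleftrightarrow> independent (v ` {..<L}) \<and> v L \<notin> span (v ` {..<L})"
    by (simp add: lessThan_Suc independent_insert)
  also have "\<dots> \<longleftrightarrow> (\<forall>l<Suc L. v l \<notin> span (v ` {..<l}))"
    using Suc by (auto simp: less_Suc_eq inj_on_subset)
  finally show ?case .
qed (simp add: independent_empty)

definition orth_residual :: "(nat \<Rightarrow> 'a::real_inner) \<Rightarrow> nat \<Rightarrow> 'a \<Rightarrow> 'a" where
  "orth_residual v L b = b - proj_onto (gram_schmidt v) L b"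

lemma orth_residual_orthogonal:
  assumes "y \<in> span (v ` {..<L})"
  shows "orth_residual v L b \<bullet> y = 0"
proof -
  have "orthogonal (orth_residual v L b) z" if "z \<in> gram_schmidt v ` {..<L}" for z
    using that inner_proj_residual_eq_0[OF gram_schmidt_orthogonal]
    by (auto simp: orthogonal_def orth_residual_def)
  then show ?thesis
    using assms orthogonal_to_span[of y "gram_schmidt v ` {..<L}"]
    by (simp add: span_gram_schmidt orthogonal_def)
qed

lemma orth_residual_diff_in_span: "b - orth_residual v L b \<in> span (v ` {..<L})"
  using proj_onto_in_span[of "gram_schmidt v" L b] by (simp add: orth_residual_def span_gram_schmidt)

fun first_nonzero :: "('b \<Rightarrow> 'a::zero) \<Rightarrow> 'b list \<Rightarrow> 'a" where
  "first_nonzero f [] = 0"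
| "first_nonzero f (b # bs) = (if f b \<noteq> 0 then f b else first_nonzero f bs)"

lemma first_nonzero_nonzero:
  assumes "\<exists>b\<in>set bs. f b \<noteq> 0"
  shows "first_nonzero f bs \<noteq> 0"
  using assms by (induction bs) auto

definition basis_list :: "'a::euclidean_space list" where
  "basis_list = (SOME bs. set bs = Basis)"

lemma set_basis_list: "set basis_list = Basis"
  unfolding basis_list_def by (rule someI_ex) (simp add: finite_list)

text \<open>Integrability of the k-set count needs its measurability, so the two halfspaces through
  a spanning d-subset are described by an explicit normal vector that depends measurably on the
  points: the first nonzero residual of a basis vector after projecting off v 0, ..., v (L-1).\<close>
definition complement_normal :: "(nat \<Rightarrow> 'a::euclidean_space) \<Rightarrow> nat \<Rightarrow> 'a" where
  "complement_normal v L = first_nonzero (orth_residual v L) basis_list"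

lemma complement_normal_nonzero:
  fixes v :: "nat \<Rightarrow> 'a::euclidean_space"
  assumes "L < DIM('a)"
  shows "complement_normal v L \<noteq> 0"
proof -
  have "\<exists>b\<in>set basis_list. orth_residual v L b \<noteq> 0"
  proof (rule ccontr)
    assume "\<not> ?thesis"
    then have "Basis \<subseteq> span (v ` {..<L})"
      using orth_residual_diff_in_span[of _ v L] by (metis diff_zero set_basis_list subsetI)
    then have "span (v ` {..<L}) = UNIV"
      by (metis span_Basis span_minimal subspace_span top.extremum_uniqueI)
    then have "DIM('a) = dim (span (v ` {..<L}))"
      by simp
    also have "\<dots> \<le> card (v ` {..<L})"
      by (simp add: dim_le_card' dim_span)
    also have "\<dots> \<le> L"
      using card_image_le[of "{..<L}" v] by simp
    finally show False
      using assms by simp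
  qed
  then show ?thesis
    unfolding complement_normal_def by (rule first_nonzero_nonzero)
qed

lemma complement_normal_orthogonal:
  assumes "y \<in> span (v ` {..<L})"
  shows "complement_normal v L \<bullet> y = 0"
proof -
  have "\<forall>b\<in>set basis_list. orth_residual v L b \<bullet> y = 0"
    using orth_residual_orthogonal[OF assms] by blast
  moreover have "\<forall>b\<in>set bs. f b \<bullet> y = 0 \<Longrightarrow> first_nonzero f bs \<bullet> y = 0" for f and bs :: "'a list"
    by (induction bs) auto
  ultimately show ?thesis
    unfolding complement_normal_def by blast
qed

lemma normal_of_hyperplane_subspace:
  fixes u a :: "'a::euclidean_space"
  assumes V: "subspace V" "dim V = DIM('a) - 1" and u: "u \<noteq> 0" "\<forall>y\<in>V. u \<bullet> y = 0"
    and a: "\<forall>y\<in>V. a \<bullet> y = 0"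
  shows "a = ((a \<bullet> u) / (u \<bullet> u)) *\<^sub>R u"
proof -
  have "V \<subseteq> {y. u \<bullet> y = 0}"
    using u by auto
  then have V_eq: "V = {y. u \<bullet> y = 0}"
    using V dim_hyperplane[OF u(1)] by (intro subspace_dim_equal subspace_hyperplane) auto
  define y where "y = a - ((a \<bullet> u) / (u \<bullet> u)) *\<^sub>R u"
  have "u \<bullet> y = 0"
    using u unfolding y_def by (simp add: inner_diff_right inner_commute)
  then have "a \<bullet> y = 0"
    using a V_eq by auto
  with \<open>u \<bullet> y = 0\<close> have "y \<bullet> y = 0"
    unfolding y_def by (simp add: inner_diff_left)
  then show ?thesis
    unfolding y_def by simp
qed

section \<open>The two halfspaces bounded by the hyperplane of a spanning d-subset\<close>

definition edge_vectors :: "(nat \<Rightarrow> 'a::real_vector) \<Rightarrow> nat list \<Rightarrow> nat \<Rightarrow> 'a" where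
  "edge_vectors x ls l = x (ls ! Suc l) - x (ls ! 0)"

lemma
  fixes x :: "nat \<Rightarrow> 'a::euclidean_space"
  assumes I: "card I = DIM('a)" "inj_on x I" and ls: "ls = sorted_list_of_set I"
  shows inj_on_edge_vectors: "inj_on (edge_vectors x ls) {..<DIM('a) - 1}"
    and affine_independent_iff_edge_vectors:
      "\<not> affine_dependent (x ` I) \<longleftrightarrow> independent (edge_vectors x ls ` {..<DIM('a) - 1})"
proof -
  have "finite I"
    using I(1) by (metis DIM_positive card_ge_0_finite)
  then have ls_set: "set ls = I" "distinct ls" "length ls = DIM('a)"
    using I(1) ls by auto
  let ?p = "x (ls ! 0)"
  have ls0: "ls ! 0 \<in> I"
    using ls_set nth_mem[of 0 ls] by simp
  have mem: "ls ! Suc l \<in> I" if "l < DIM('a) - 1" for l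
    using that ls_set nth_mem[of "Suc l" ls] by simp
  have ls_inj: "ls ! i = ls ! j \<longleftrightarrow> i = j" if "i < DIM('a)" "j < DIM('a)" for i j
    using that ls_set by (simp add: nth_eq_iff_index_eq)
  show "inj_on (edge_vectors x ls) {..<DIM('a) - 1}"
    by (rule inj_onI) (auto simp: edge_vectors_def ls_inj dest!: inj_onD[OF I(2)] intro: mem)
  have "(\<lambda>y. - ?p + y) ` (x ` I - {?p}) = edge_vectors x ls ` {..<DIM('a) - 1}"
  proof (intro equalityI subsetI)
    fix z assume "z \<in> (\<lambda>y. - ?p + y) ` (x ` I - {?p})"
    then obtain i where i: "i \<in> I" "x i \<noteq> ?p" "z = - ?p + x i"
      by auto
    then obtain j where j: "j < length ls" "x (ls ! j) \<noteq> ?p" "z = - ?p + x (ls ! j)"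
      using ls_set by (metis in_set_conv_nth)
    then obtain l where "j = Suc l"
      by (cases j) auto
    with j ls_set show "z \<in> edge_vectors x ls ` {..<DIM('a) - 1}"
      by (intro image_eqI[of _ _ l]) (auto simp: edge_vectors_def)
  next
    fix z assume "z \<in> edge_vectors x ls ` {..<DIM('a) - 1}"
    then obtain l where l: "l < DIM('a) - 1" "z = edge_vectors x ls l"
      by auto
    have "x (ls ! Suc l) \<noteq> ?p"
      using inj_onD[OF I(2) _ mem[OF l(1)] ls0] ls_inj[of "Suc l" 0] l(1) by auto
    then show "z \<in> (\<lambda>y. - ?p + y) ` (x ` I - {?p})"
      using mem[OF l(1)] l by (intro image_eqI[of _ _ "x (ls ! Suc l)"]) (auto simp: edge_vectors_def)
  qed
  then show "\<not> affine_dependent (x ` I) \<longleftrightarrow> independent (edge_vectors x ls ` {..<DIM('a) - 1})"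
    using affine_dependent_iff_dependent2[of ?p "x ` I"] ls0 by simp
qed

lemma orthogonal_span_edge_vectors_iff:
  assumes "set ls = I" "ls \<noteq> []"
  shows "(\<forall>y\<in>span (edge_vectors x ls ` {..<length ls - 1}). a \<bullet> y = 0) \<longleftrightarrow> (\<forall>i\<in>I. a \<bullet> x i = a \<bullet> x (ls ! 0))"
proof
  assume orth: "\<forall>y\<in>span (edge_vectors x ls ` {..<length ls - 1}). a \<bullet> y = 0"
  show "\<forall>i\<in>I. a \<bullet> x i = a \<bullet> x (ls ! 0)"
  proof
    fix i assume "i \<in> I"
    then obtain j where j: "j < length ls" "i = ls ! j"
      using assms(1) by (auto simp: in_set_conv_nth)
    show "a \<bullet> x i = a \<bullet> x (ls ! 0)"
    proof (cases j)
      case (Suc l)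
      then have "a \<bullet> edge_vectors x ls l = 0"
        using orth j by (simp add: span_base)
      then show ?thesis
        using j Suc by (simp add: edge_vectors_def inner_diff_right)
    qed (use j in simp)
  qed
next
  assume on: "\<forall>i\<in>I. a \<bullet> x i = a \<bullet> x (ls ! 0)"
  have "orthogonal a (edge_vectors x ls l)" if "l < length ls - 1" for l
    using that assms on nth_mem[of "Suc l" ls] by (simp add: orthogonal_def edge_vectors_def inner_diff_right)
  then show "\<forall>y\<in>span (edge_vectors x ls ` {..<length ls - 1}). a \<bullet> y = 0"
    using orthogonal_to_span[where x=a] unfolding orthogonal_def by blast
qed

definition hyperplane_normal :: "(nat \<Rightarrow> 'a::euclidean_space) \<Rightarrow> nat set \<Rightarrow> 'a" where
  "hyperplane_normal x I = complement_normal (edge_vectors x (sorted_list_of_set I)) (DIM('a) - 1)"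

definition hyperplane_base :: "(nat \<Rightarrow> 'a::euclidean_space) \<Rightarrow> nat set \<Rightarrow> 'a" where
  "hyperplane_base x I = x (sorted_list_of_set I ! 0)"

lemma hyperplane_normal_nonzero: "hyperplane_normal x I \<noteq> 0"
  unfolding hyperplane_normal_def by (rule complement_normal_nonzero) simp

lemma open_halfspaces_through_spanning:
  fixes x :: "nat \<Rightarrow> 'a::euclidean_space"
  assumes "spanning_dsubset x m I"
  defines "u \<equiv> hyperplane_normal x I" and "p \<equiv> hyperplane_base x I"
  shows "open_halfspaces_through x I = {{y. u \<bullet> p < u \<bullet> y}, {y. (- u) \<bullet> p < (- u) \<bullet> y}}"
proof -
  define ls where "ls = sorted_list_of_set I"
  have card: "card I = DIM('a)" and inj: "inj_on x I" and indep: "\<not> affine_dependent (x ` I)"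
    using assms(1) by (auto simp: spanning_dsubset_def)
  then have "finite I"
    by (metis DIM_positive card_ge_0_finite)
  then have ls: "set ls = I" "ls \<noteq> []" "length ls = DIM('a)"
    using card ls_def by auto
  have p_on: "x (ls ! 0) = p" "ls ! 0 \<in> I"
    using ls nth_mem[of 0 ls] by (auto simp: p_def hyperplane_base_def ls_def)
  let ?V = "span (edge_vectors x ls ` {..<length ls - 1})"
  have "dim ?V = card (edge_vectors x ls ` {..<DIM('a) - 1})"
    using affine_independent_iff_edge_vectors[OF card inj ls_def] indep
    by (metis dim_span_eq_card_independent ls(3))
  then have dim_V: "dim ?V = DIM('a) - 1"
    using card_image[OF inj_on_edge_vectors[OF card inj ls_def]] by simp
  have u: "u \<noteq> 0" "\<forall>y\<in>?V. u \<bullet> y = 0"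
    using hyperplane_normal_nonzero complement_normal_orthogonal ls(3)
    by (auto simp: u_def hyperplane_normal_def ls_def)
  have u_on: "\<forall>i\<in>I. u \<bullet> x i = u \<bullet> p"
    using u(2) orthogonal_span_edge_vectors_iff[OF ls(1,2), of x u] by (simp add: p_def hyperplane_base_def ls_def)
  show ?thesis
  proof (intro equalityI subsetI)
    fix h assume "h \<in> {{y. u \<bullet> p < u \<bullet> y}, {y. (- u) \<bullet> p < (- u) \<bullet> y}}"
    then show "h \<in> open_halfspaces_through x I"
    proof (elim insertE singletonE emptyE)
      assume "h = {y. u \<bullet> p < u \<bullet> y}"
      then show ?thesis
        unfolding open_halfspaces_through_def using u(1) u_on by blast
    next
      assume "h = {y. (- u) \<bullet> p < (- u) \<bullet> y}"
      moreover have "- u \<noteq> 0" "\<forall>i\<in>I. (- u) \<bullet> x i = (- u) \<bullet> p"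
        using u(1) u_on by auto
      ultimately show ?thesis
        unfolding open_halfspaces_through_def by blast
    qed
  next
    fix h assume "h \<in> open_halfspaces_through x I"
    then obtain a b where h: "h = {y. b < a \<bullet> y}" and "a \<noteq> 0" and ab: "\<forall>i\<in>I. a \<bullet> x i = b"
      unfolding open_halfspaces_through_def by auto
    have "\<forall>i\<in>I. a \<bullet> x i = a \<bullet> p"
      using ab p_on by force
    then have "\<forall>y\<in>?V. a \<bullet> y = 0"
      using orthogonal_span_edge_vectors_iff[OF ls(1,2), of x a] by (simp add: p_def hyperplane_base_def ls_def)
    then have "a = ((a \<bullet> u) / (u \<bullet> u)) *\<^sub>R u"
      using normal_of_hyperplane_subspace[OF subspace_span _ u] dim_V ls(3) by simp
    then obtain c where a: "a = c *\<^sub>R u"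
      by blast
    with \<open>a \<noteq> 0\<close> have "c \<noteq> 0"
      by auto
    have b: "b = c * (u \<bullet> p)"
      using ab p_on by (simp add: a flip: p_on(1))
    show "h \<in> {{y. u \<bullet> p < u \<bullet> y}, {y. (- u) \<bullet> p < (- u) \<bullet> y}}"
    proof (cases "c > 0")
      case True
      then have "h = {y. u \<bullet> p < u \<bullet> y}"
        unfolding h b a by (auto simp: mult_less_cancel_left)
      then show ?thesis by simp
    next
      case False
      with \<open>c \<noteq> 0\<close> have "h = {y. (- u) \<bullet> p < (- u) \<bullet> y}"
        unfolding h b a by (auto simp: mult_less_cancel_left)
      then show ?thesis by simp
    qed
  qed
qed

section \<open>Measurability and integrability of the number of k-sets\<close>

lemma borel_measurable_gram_schmidt:
  fixes v :: "'b \<Rightarrow> nat \<Rightarrow> 'a::euclidean_space"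
  assumes "\<And>l'. l' \<le> l \<Longrightarrow> (\<lambda>x. v x l') \<in> borel_measurable M"
  shows "(\<lambda>x. gram_schmidt (v x) l) \<in> borel_measurable M"
  using assms
proof (induction l rule: less_induct)
  case (less l)
  then have [measurable]: "j < l \<Longrightarrow> (\<lambda>x. gram_schmidt (v x) j) \<in> borel_measurable M" for j
    by simp
  have [measurable]: "(\<lambda>x. v x l) \<in> borel_measurable M"
    using less.prems by simp
  show ?case
    by (subst gram_schmidt.simps) measurable
qed

lemma borel_measurable_orth_residual:
  fixes v :: "'b \<Rightarrow> nat \<Rightarrow> 'a::euclidean_space"
  assumes "\<And>l. l < L \<Longrightarrow> (\<lambda>x. v x l) \<in> borel_measurable M"
  shows "(\<lambda>x. orth_residual (v x) L b) \<in> borel_measurable M"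
proof -
  have [measurable]: "j < L \<Longrightarrow> (\<lambda>x. gram_schmidt (v x) j) \<in> borel_measurable M" for j
    using assms by (intro borel_measurable_gram_schmidt) simp
  show ?thesis
    unfolding orth_residual_def proj_onto_def by measurable
qed

lemma borel_measurable_first_nonzero:
  fixes f :: "'b \<Rightarrow> 'c \<Rightarrow> 'a::euclidean_space"
  assumes "\<And>b. b \<in> set bs \<Longrightarrow> (\<lambda>x. f x b) \<in> borel_measurable M"
  shows "(\<lambda>x. first_nonzero (f x) bs) \<in> borel_measurable M"
  using assms
proof (induction bs)
  case (Cons b bs)
  then have [measurable]: "(\<lambda>x. f x b) \<in> borel_measurable M" "(\<lambda>x. first_nonzero (f x) bs) \<in> borel_measurable M"
    by simp_all
  have [measurable]: "Measurable.pred M (\<lambda>x. f x b \<noteq> 0)"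
    by (intro pred_intros_logic) (simp add: Measurable.pred_def)
  show ?case
    by simp measurable
qed simp

lemma borel_measurable_complement_normal:
  fixes v :: "'b \<Rightarrow> nat \<Rightarrow> 'a::euclidean_space"
  assumes "\<And>l. l < L \<Longrightarrow> (\<lambda>x. v x l) \<in> borel_measurable M"
  shows "(\<lambda>x. complement_normal (v x) L) \<in> borel_measurable M"
  unfolding complement_normal_def
  by (intro borel_measurable_first_nonzero borel_measurable_orth_residual assms)

lemma
  fixes I :: "nat set"
  assumes I: "I \<subseteq> {..<m}" "card I = DIM('a::euclidean_space)"
  defines "N \<equiv> PiM {..<m} (\<lambda>_. borel :: 'a measure)"
  shows borel_measurable_edge_vectors:
      "l < DIM('a) - 1 \<Longrightarrow> (\<lambda>x. edge_vectors x (sorted_list_of_set I) l) \<in> borel_measurable N"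
    and borel_measurable_hyperplane_normal: "(\<lambda>x. hyperplane_normal x I) \<in> borel_measurable N"
    and borel_measurable_hyperplane_base: "(\<lambda>x. hyperplane_base x I) \<in> borel_measurable N"
proof -
  let ?ls = "sorted_list_of_set I"
  have "finite I"
    using I(1) finite_subset by blast
  then have ls: "set ?ls = I" "length ?ls = DIM('a)"
    using I(2) by auto
  have index: "?ls ! i \<in> {..<m}" if "i < DIM('a)" for i
    using I(1) ls nth_mem[of i ?ls] that by auto
  have [measurable]: "?ls ! 0 \<in> {..<m}"
    using index[of 0] by simp
  show edges: "(\<lambda>x. edge_vectors x ?ls l) \<in> borel_measurable N" if "l < DIM('a) - 1" for l
  proof -
    have [measurable]: "?ls ! Suc l \<in> {..<m}"
      using index that by simp
    show ?thesis
      unfolding edge_vectors_def N_def by measurable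
  qed
  show "(\<lambda>x. hyperplane_normal x I) \<in> borel_measurable N"
    unfolding hyperplane_normal_def by (intro borel_measurable_complement_normal edges)
  show "(\<lambda>x. hyperplane_base x I) \<in> borel_measurable N"
    unfolding hyperplane_base_def N_def by measurable
qed

lemma spanning_dsubset_iff_gram_schmidt:
  fixes x :: "nat \<Rightarrow> 'a::euclidean_space"
  assumes I: "I \<subseteq> {..<m}" "card I = DIM('a)"
  shows "spanning_dsubset x m I \<longleftrightarrow>
    (\<forall>i\<in>I. \<forall>j\<in>I. i \<noteq> j \<longrightarrow> x i \<noteq> x j) \<and>
    (\<forall>l\<in>{..<DIM('a) - 1}. gram_schmidt (edge_vectors x (sorted_list_of_set I)) l \<noteq> 0)"
proof (cases "inj_on x I")
  case True
  let ?v = "edge_vectors x (sorted_list_of_set I)"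
  have "\<not> affine_dependent (x ` I) \<longleftrightarrow> (\<forall>l<DIM('a) - 1. ?v l \<notin> span (?v ` {..<l}))"
    using affine_independent_iff_edge_vectors[OF I(2) True refl]
      independent_iff_not_in_span_prefix[OF inj_on_edge_vectors[OF I(2) True refl]]
    by simp
  moreover have "\<forall>i\<in>I. \<forall>j\<in>I. i \<noteq> j \<longrightarrow> x i \<noteq> x j"
    using True by (auto simp: inj_on_def)
  ultimately show ?thesis
    using True I by (auto simp: spanning_dsubset_def gram_schmidt_eq_0_iff)
qed (use I in \<open>auto simp: spanning_dsubset_def inj_on_def\<close>)

lemma pred_spanning_dsubset:
  assumes I: "I \<subseteq> {..<m}" "card I = DIM('a::euclidean_space)"
  shows "Measurable.pred (PiM {..<m} (\<lambda>_. borel :: 'a measure)) (\<lambda>x. spanning_dsubset x m I)"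
proof -
  let ?N = "PiM {..<m} (\<lambda>_. borel :: 'a measure)"
  have [measurable]: "i \<in> {..<m}" if "i \<in> I" for i
    using I that by auto
  have [measurable]: "Measurable.pred ?N (\<lambda>x. x i = x j)" if "i \<in> I" "j \<in> I" for i j
    using that by (simp add: Measurable.pred_def)
  have [measurable]: "Measurable.pred ?N (\<lambda>x. gram_schmidt (edge_vectors x (sorted_list_of_set I)) l = 0)"
    if "l \<in> {..<DIM('a) - 1}" for l
    using that borel_measurable_gram_schmidt[OF borel_measurable_edge_vectors[OF I]]
    by (simp add: Measurable.pred_def)
  have "finite I"
    using I(1) finite_subset by blast
  then have "Measurable.pred ?N (\<lambda>x. (\<forall>i\<in>I. \<forall>j\<in>I. i \<noteq> j \<longrightarrow> x i \<noteq> x j) \<and>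
      (\<forall>l\<in>{..<DIM('a) - 1}. gram_schmidt (edge_vectors x (sorted_list_of_set I)) l \<noteq> 0))"
    by measurable
  then show ?thesis
    by (simp add: spanning_dsubset_iff_gram_schmidt[OF I])
qed

definition halfspace_count :: "nat \<Rightarrow> (nat \<Rightarrow> 'a::real_inner) \<Rightarrow> 'a \<Rightarrow> 'a \<Rightarrow> real" where
  "halfspace_count m x u p = (\<Sum>j<m. if u \<bullet> p < u \<bullet> x j then 1 else 0)"

lemma sum_if_1_0_eq_card:
  assumes "finite A"
  shows "(\<Sum>x\<in>A. if P x then 1 else 0) = card {x \<in> A. P x}"
  using assms by (simp add: sum.If_cases Int_def conj_commute)

lemma card_filter_doubleton:
  assumes "a \<noteq> b"
  shows "card {x \<in> {a, b}. P x} = (if P a then 1 else 0) + (if P b then 1 else 0)"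
proof -
  have "{x \<in> {a, b}. P x} = (if P a then {a} else {}) \<union> (if P b then {b} else {})"
    by auto
  then show ?thesis
    using assms by (cases "P a"; cases "P b") auto
qed

definition ksets_through :: "nat \<Rightarrow> nat \<Rightarrow> nat set \<Rightarrow> (nat \<Rightarrow> 'a::euclidean_space) \<Rightarrow> real" where
  "ksets_through k m I x =
     (if spanning_dsubset x m I then
        (if halfspace_count m x (hyperplane_normal x I) (hyperplane_base x I) = k then 1 else 0)
      + (if halfspace_count m x (- hyperplane_normal x I) (hyperplane_base x I) = k then 1 else 0)
      else 0)"

lemma card_ksets_through:
  fixes x :: "nat \<Rightarrow> 'a::euclidean_space"
  assumes "spanning_dsubset x m I"
  shows "real (card {h \<in> open_halfspaces_through x I. card {j\<in>{..<m}. x j \<in> h} = k}) = ksets_through k m I x"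
proof -
  let ?u = "hyperplane_normal x I" and ?p = "hyperplane_base x I"
  let ?c = "\<lambda>v. card {j\<in>{..<m}. x j \<in> {y. v \<bullet> ?p < v \<bullet> y}}"
  have "?p + ?u \<in> {y. ?u \<bullet> ?p < ?u \<bullet> y}" "?p + ?u \<notin> {y. (- ?u) \<bullet> ?p < (- ?u) \<bullet> y}"
    using hyperplane_normal_nonzero[of x I] by (auto simp: inner_add_right) (metis inner_ge_zero not_less)
  then have "{y. ?u \<bullet> ?p < ?u \<bullet> y} \<noteq> {y. (- ?u) \<bullet> ?p < (- ?u) \<bullet> y}"
    by blast
  then have "card {h \<in> open_halfspaces_through x I. card {j\<in>{..<m}. x j \<in> h} = k}
      = (if ?c ?u = k then 1 else 0) + (if ?c (- ?u) = k then 1 else 0)"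
    unfolding open_halfspaces_through_spanning[OF assms] by (rule card_filter_doubleton)
  moreover have "halfspace_count m x v ?p = real (?c v)" for v
    using sum_if_1_0_eq_card[of "{..<m}" "\<lambda>j. v \<bullet> ?p < v \<bullet> x j"]
    by (simp add: halfspace_count_def of_nat_sum[symmetric] of_bool_def[symmetric])
  ultimately show ?thesis
    using assms by (simp add: ksets_through_def)
qed

lemma num_ksets_eq_sum_ksets_through:
  fixes x :: "nat \<Rightarrow> 'a::euclidean_space"
  shows "real (num_ksets k m x) = (\<Sum>I\<in>{I. I \<subseteq> {..<m} \<and> card I = DIM('a)}. ksets_through k m I x)"
proof -
  let ?A = "{I. I \<subseteq> {..<m} \<and> card I = DIM('a)}"
  have "finite ?A"
    by (rule finite_subset[of _ "Pow {..<m}"]) auto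
  moreover have "{I. spanning_dsubset x m I} = {I \<in> ?A. spanning_dsubset x m I}"
    by (auto simp: spanning_dsubset_def)
  ultimately have "num_ksets k m x = (\<Sum>I\<in>?A. if spanning_dsubset x m I then
      card {h \<in> open_halfspaces_through x I. card {j\<in>{..<m}. x j \<in> h} = k} else 0)"
    unfolding num_ksets_def by (simp only: sum.inter_filter)
  also have "real \<dots> = (\<Sum>I\<in>?A. ksets_through k m I x)"
    unfolding of_nat_sum
  proof (rule sum.cong[OF refl])
    fix I
    show "real (if spanning_dsubset x m I then
        card {h \<in> open_halfspaces_through x I. card {j\<in>{..<m}. x j \<in> h} = k} else 0) = ksets_through k m I x"
      using card_ksets_through[of x m I k] by (simp add: ksets_through_def)
  qed
  finally show ?thesis .
qed

lemma borel_measurable_ksets_through: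
  assumes I: "I \<subseteq> {..<m}" "card I = DIM('a::euclidean_space)"
  shows "ksets_through k m I \<in> borel_measurable (PiM {..<m} (\<lambda>_. borel :: 'a measure))"
proof -
  note [measurable] = borel_measurable_hyperplane_normal[OF I] borel_measurable_hyperplane_base[OF I]
    pred_spanning_dsubset[OF I]
  show ?thesis
    unfolding ksets_through_def[abs_def] halfspace_count_def by measurable
qed

lemma borel_measurable_num_ksets:
  fixes P :: "'a::euclidean_space measure"
  assumes "sets P = sets borel"
  shows "(\<lambda>x. real (num_ksets k m x)) \<in> borel_measurable (PiM {..<m} (\<lambda>_. P))"
proof -
  have "sets (PiM {..<m} (\<lambda>_. P)) = sets (PiM {..<m} (\<lambda>_. borel :: 'a measure))"
    using assms by (intro sets_PiM_cong) auto
  then have eq: "borel_measurable (PiM {..<m} (\<lambda>_. P)) = borel_measurable (PiM {..<m} (\<lambda>_. borel :: 'a measure))"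
    by (intro measurable_cong_sets) auto
  show ?thesis
    unfolding num_ksets_eq_sum_ksets_through eq
    by (intro borel_measurable_sum borel_measurable_ksets_through) auto
qed

lemma num_ksets_le: "real (num_ksets k m x) \<le> 2 * 2 ^ m"
proof -
  let ?A = "{I. I \<subseteq> {..<m} \<and> card I = DIM('a)}"
  have "real (num_ksets k m x) \<le> (\<Sum>I\<in>?A. 2)"
    unfolding num_ksets_eq_sum_ksets_through by (rule sum_mono) (simp add: ksets_through_def)
  also have "\<dots> \<le> 2 * 2 ^ m"
  proof -
    have "card ?A \<le> card (Pow {..<m})"
      by (rule card_mono) auto
    then show ?thesis
      by (simp add: card_Pow)
  qed
  finally show ?thesis .
qed

lemma integrable_num_ksets:
  fixes P :: "'a::euclidean_space measure"
  assumes "prob_space P" "sets P = sets borel"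
  shows "integrable (PiM {..<m} (\<lambda>_. P)) (\<lambda>x. real (num_ksets k m x))"
proof -
  interpret prob_space "PiM {..<m} (\<lambda>_. P)"
    using assms(1) by (intro prob_space_PiM) auto
  show ?thesis
    using num_ksets_le borel_measurable_num_ksets[OF assms(2)]
    by (intro integrable_const_bound[where B = "2 * 2 ^ m"]) auto
qed

section \<open>Double counting over subfamilies\<close>

definition num_ksets_on :: "nat \<Rightarrow> nat set \<Rightarrow> (nat \<Rightarrow> 'a::euclidean_space) \<Rightarrow> nat" where
  "num_ksets_on k S x = (\<Sum>I\<in>{I. I \<subseteq> S \<and> card I = DIM('a) \<and> inj_on x I \<and> \<not> affine_dependent (x ` I)}.
        card {h \<in> open_halfspaces_through x I. card {j\<in>S. x j \<in> h} = k})"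

lemma num_ksets_eq_num_ksets_on: "num_ksets k m x = num_ksets_on k {..<m} x"
  unfolding num_ksets_def num_ksets_on_def spanning_dsubset_def by simp

lemma num_ksets_on_reindex:
  fixes x y :: "nat \<Rightarrow> 'a::euclidean_space"
  assumes inj: "inj_on \<sigma> T" and img: "\<sigma> ` T = S" and y: "\<And>j. j \<in> T \<Longrightarrow> y j = x (\<sigma> j)"
  shows "num_ksets_on k T y = num_ksets_on k S x"
  unfolding num_ksets_on_def
proof (rule sum.reindex_bij_witness[where j = "\<lambda>I. \<sigma> ` I" and i = "\<lambda>J. {t\<in>T. \<sigma> t \<in> J}"])
  have image_y: "y ` I = x ` (\<sigma> ` I)" if "I \<subseteq> T" for I
  proof -
    have "y ` I = (\<lambda>j. x (\<sigma> j)) ` I"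
      using that y by (intro image_cong) auto
    then show ?thesis
      by (simp only: image_image)
  qed
  have inj_y: "inj_on y I \<longleftrightarrow> inj_on x (\<sigma> ` I)" if "I \<subseteq> T" for I
  proof -
    have "inj_on y I \<longleftrightarrow> inj_on (x \<circ> \<sigma>) I"
      using that y by (intro inj_on_cong) auto
    also have "\<dots> \<longleftrightarrow> inj_on x (\<sigma> ` I)"
      using comp_inj_on_iff[OF inj_on_subset[OF inj that]] by blast
    finally show ?thesis .
  qed
  have card_image_\<sigma>: "card (\<sigma> ` I) = card I" if "I \<subseteq> T" for I
    using card_image[OF inj_on_subset[OF inj that]] .
  {
    fix I assume "I \<in> {I. I \<subseteq> T \<and> card I = DIM('a) \<and> inj_on y I \<and> \<not> affine_dependent (y ` I)}"
    then have I: "I \<subseteq> T" "card I = DIM('a)" "inj_on y I" "\<not> affine_dependent (y ` I)"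
      by auto
    show "{t \<in> T. \<sigma> t \<in> \<sigma> ` I} = I"
      using I(1) inj_on_image_mem_iff[OF inj] by blast
    show "\<sigma> ` I \<in> {I. I \<subseteq> S \<and> card I = DIM('a) \<and> inj_on x I \<and> \<not> affine_dependent (x ` I)}"
      using I img card_image_\<sigma>[OF I(1)] inj_y[OF I(1)] image_y[OF I(1)] by auto
    have "(\<forall>i\<in>\<sigma> ` I. a \<bullet> x i = b) \<longleftrightarrow> (\<forall>i\<in>I. a \<bullet> y i = b)" for a b
      using I(1) y by (auto simp: subset_iff)
    then have "open_halfspaces_through x (\<sigma> ` I) = open_halfspaces_through y I"
      unfolding open_halfspaces_through_def by simp
    moreover have "card {j\<in>S. x j \<in> h} = card {j\<in>T. y j \<in> h}" for h
    proof -
      have "{j\<in>S. x j \<in> h} = \<sigma> ` {j\<in>T. y j \<in> h}"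
        using img y by (auto simp: image_iff)
      then show ?thesis
        using card_image[OF inj_on_subset[OF inj, of "{j\<in>T. y j \<in> h}"]] by auto
    qed
    ultimately show "card {h \<in> open_halfspaces_through x (\<sigma> ` I). card {j\<in>S. x j \<in> h} = k} =
        card {h \<in> open_halfspaces_through y I. card {j\<in>T. y j \<in> h} = k}"
      by simp
  }
  fix J assume "J \<in> {I. I \<subseteq> S \<and> card I = DIM('a) \<and> inj_on x I \<and> \<not> affine_dependent (x ` I)}"
  then have J: "J \<subseteq> S" "card J = DIM('a)" "inj_on x J" "\<not> affine_dependent (x ` J)"
    by auto
  let ?I = "{t\<in>T. \<sigma> t \<in> J}"
  have sub: "?I \<subseteq> T"
    by blast
  show image_I: "\<sigma> ` ?I = J"
    using J(1) img by blast
  show "?I \<in> {I. I \<subseteq> T \<and> card I = DIM('a) \<and> inj_on y I \<and> \<not> affine_dependent (y ` I)}"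
    using J card_image_\<sigma>[OF sub] inj_y[OF sub] image_y[OF sub] image_I sub by simp
qed

lemma card_subsets_containing_avoiding:
  assumes U: "finite U" and IJ: "I \<subseteq> U" "J \<subseteq> U" "I \<inter> J = {}" and r: "card I \<le> r"
  shows "card {S. S \<subseteq> U \<and> card S = r \<and> I \<subseteq> S \<and> S \<inter> J = {}} = (card U - card I - card J) choose (r - card I)"
proof -
  let ?W = "U - I - J"
  have fin: "finite I" "finite J"
    using U IJ finite_subset by blast+
  have "bij_betw (\<lambda>S. S - I) {S. S \<subseteq> U \<and> card S = r \<and> I \<subseteq> S \<and> S \<inter> J = {}} {T. T \<subseteq> ?W \<and> card T = r - card I}"
  proof (rule bij_betw_byWitness[where f' = "\<lambda>T. T \<union> I"])
    show "(\<lambda>S. S - I) ` {S. S \<subseteq> U \<and> card S = r \<and> I \<subseteq> S \<and> S \<inter> J = {}} \<subseteq> {T. T \<subseteq> ?W \<and> card T = r - card I}"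
      using U fin by (auto simp: card_Diff_subset dest: finite_subset)
    show "(\<lambda>T. T \<union> I) ` {T. T \<subseteq> ?W \<and> card T = r - card I} \<subseteq> {S. S \<subseteq> U \<and> card S = r \<and> I \<subseteq> S \<and> S \<inter> J = {}}"
    proof clarify
      fix T assume T: "T \<subseteq> ?W" "card T = r - card I"
      then have "card (T \<union> I) = card T + card I"
        using U fin by (intro card_Un_disjoint) (auto dest: finite_subset)
      then show "T \<union> I \<subseteq> U \<and> card (T \<union> I) = r \<and> I \<subseteq> T \<union> I \<and> (T \<union> I) \<inter> J = {}"
        using T IJ r by auto
    qed
  qed auto
  then have "card {S. S \<subseteq> U \<and> card S = r \<and> I \<subseteq> S \<and> S \<inter> J = {}} = card ?W choose (r - card I)"
    using n_subsets[of ?W "r - card I"] U by (simp add: bij_betw_same_card)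
  moreover have "card ?W = card U - card I - card J"
  proof -
    have "J \<subseteq> U - I"
      using IJ by blast
    then show ?thesis
      using card_Diff_subset[OF fin(1) IJ(1)] card_Diff_subset[OF fin(2)] by simp
  qed
  ultimately show ?thesis
    by simp
qed

lemma not_in_open_halfspace_through:
  assumes "h \<in> open_halfspaces_through x I" "i \<in> I"
  shows "x i \<notin> h"
  using assms unfolding open_halfspaces_through_def by auto

lemma finite_open_halfspaces_through:
  assumes "spanning_dsubset x m I"
  shows "finite (open_halfspaces_through x I)"
  using open_halfspaces_through_spanning[OF assms] by simp

lemma card_halfspace_le:
  fixes x :: "nat \<Rightarrow> 'a::euclidean_space"
  assumes I: "spanning_dsubset x n I" and h: "h \<in> open_halfspaces_through x I"
  shows "card {j\<in>{..<n}. x j \<in> h} + DIM('a) \<le> n"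
proof -
  let ?J = "{j\<in>{..<n}. x j \<in> h}"
  have I_sub: "I \<subseteq> {..<n}" and "card I = DIM('a)" and "I \<inter> ?J = {}"
    using I not_in_open_halfspace_through[OF h] by (auto simp: spanning_dsubset_def)
  then have "card (I \<union> ?J) = DIM('a) + card ?J"
    using finite_subset[OF I_sub] by (simp add: card_Un_disjoint)
  moreover have "card (I \<union> ?J) \<le> n"
    using card_mono[of "{..<n}" "I \<union> ?J"] I_sub by auto
  ultimately show ?thesis
    by simp
qed

lemma sum_num_ksets_on_subsets:
  fixes x :: "nat \<Rightarrow> 'a::euclidean_space"
  assumes r: "DIM('a) \<le> r"
  shows "(\<Sum>S\<in>{S. S \<subseteq> {..<n} \<and> card S = r}. num_ksets_on 0 S x)
       = (\<Sum>I\<in>{I. spanning_dsubset x n I}. \<Sum>h\<in>open_halfspaces_through x I.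
            (n - DIM('a) - card {j\<in>{..<n}. x j \<in> h}) choose (r - DIM('a)))"
proof -
  let ?SS = "{S. S \<subseteq> {..<n} \<and> card S = r}"
  let ?Sp = "{I. spanning_dsubset x n I}"
  let ?H = "open_halfspaces_through x"
  let ?g = "\<lambda>S I h. if I \<subseteq> S \<and> {j\<in>S. x j \<in> h} = {} then 1 else (0::nat)"
  have fin_SS: "finite ?SS" and fin_Sp: "finite ?Sp"
    by (auto intro: finite_subset[of _ "Pow {..<n}"] simp: spanning_dsubset_def)
  have fin_H: "finite (?H I)" if "I \<in> ?Sp" for I
    using finite_open_halfspaces_through that by auto
  have "num_ksets_on 0 S x = (\<Sum>I\<in>?Sp. \<Sum>h\<in>?H I. ?g S I h)" if S: "S \<in> ?SS" for S
  proof -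
    have "finite S"
      using S finite_subset by auto
    have "{I. I \<subseteq> S \<and> card I = DIM('a) \<and> inj_on x I \<and> \<not> affine_dependent (x ` I)} = {I \<in> ?Sp. I \<subseteq> S}"
      using S unfolding spanning_dsubset_def by auto
    then have "num_ksets_on 0 S x = (\<Sum>I\<in>?Sp. if I \<subseteq> S then card {h \<in> ?H I. card {j\<in>S. x j \<in> h} = 0} else 0)"
      unfolding num_ksets_on_def by (simp only:) (rule sum.inter_filter[OF fin_Sp])
    also have "\<dots> = (\<Sum>I\<in>?Sp. \<Sum>h\<in>?H I. ?g S I h)"
      using fin_H \<open>finite S\<close> by (intro sum.cong) (auto simp: sum_if_1_0_eq_card)
    finally show ?thesis .
  qed
  then have "(\<Sum>S\<in>?SS. num_ksets_on 0 S x) = (\<Sum>S\<in>?SS. \<Sum>I\<in>?Sp. \<Sum>h\<in>?H I. ?g S I h)"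
    by (rule sum.cong[OF refl])
  also have "\<dots> = (\<Sum>I\<in>?Sp. \<Sum>h\<in>?H I. \<Sum>S\<in>?SS. ?g S I h)"
    by (subst sum.swap) (simp add: sum.swap[of _ ?SS])
  also have "\<dots> = (\<Sum>I\<in>?Sp. \<Sum>h\<in>?H I. (n - DIM('a) - card {j\<in>{..<n}. x j \<in> h}) choose (r - DIM('a)))"
  proof (intro sum.cong[OF refl])
    fix I h assume I: "I \<in> ?Sp" and h: "h \<in> ?H I"
    let ?J = "{j\<in>{..<n}. x j \<in> h}"
    have I_sub: "I \<subseteq> {..<n}" and card_I: "card I = DIM('a)"
      using I unfolding spanning_dsubset_def by auto
    have "(\<Sum>S\<in>?SS. ?g S I h) = card {S \<in> ?SS. I \<subseteq> S \<and> {j\<in>S. x j \<in> h} = {}}"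
      using fin_SS by (rule sum_if_1_0_eq_card)
    also have "{S \<in> ?SS. I \<subseteq> S \<and> {j\<in>S. x j \<in> h} = {}} = {S. S \<subseteq> {..<n} \<and> card S = r \<and> I \<subseteq> S \<and> S \<inter> ?J = {}}"
      by blast
    also have "card \<dots> = (n - DIM('a) - card ?J) choose (r - DIM('a))"
      using card_subsets_containing_avoiding[of "{..<n}" I ?J r] I_sub card_I r
        not_in_open_halfspace_through[OF h] by auto
    finally show "(\<Sum>S\<in>?SS. ?g S I h) = (n - DIM('a) - card ?J) choose (r - DIM('a))" .
  qed
  finally show ?thesis .
qed

lemma num_ksets_eq_sum_halfspaces:
  "num_ksets k n x = (\<Sum>I\<in>{I. spanning_dsubset x n I}. \<Sum>h\<in>open_halfspaces_through x I.
      if card {j\<in>{..<n}. x j \<in> h} = k then 1 else 0)"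
  unfolding num_ksets_def by (intro sum.cong refl sum_if_1_0_eq_card[symmetric] finite_open_halfspaces_through) simp

lemma binomial_diff_le:
  "(N choose k) * (if c = 0 then 1 else 0) + ((N - 1) choose k) * (if c = 1 then 1 else 0) \<le> (N - c) choose k"
  by (cases "c = 0"; cases "c = 1") auto

lemma binomial_diff_pred:
  assumes "c \<le> N" "0 < N"
  shows "(N - c) choose (N - 1) = N * (if c = 0 then 1 else 0) + (if c = 1 then 1 else 0)"
proof -
  consider "c = 0" | "c = 1" | "1 < c"
    by linarith
  then show ?thesis
  proof cases
    case 1
    then show ?thesis
      using assms binomial_symmetric[of "N - 1" N] by simp
  next
    case 3
    then show ?thesis
      using assms by (simp add: binomial_eq_0)
  qed simp
qed

lemma sum_num_ksets_on_subsets_ge: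
  fixes x :: "nat \<Rightarrow> 'a::euclidean_space"
  assumes "DIM('a) \<le> r"
  shows "((n - DIM('a)) choose (r - DIM('a))) * num_ksets 0 n x
         + ((n - DIM('a) - 1) choose (r - DIM('a))) * num_ksets 1 n x
       \<le> (\<Sum>S\<in>{S. S \<subseteq> {..<n} \<and> card S = r}. num_ksets_on 0 S x)"
  unfolding num_ksets_eq_sum_halfspaces sum_num_ksets_on_subsets[OF assms] sum_distrib_left sum.distrib[symmetric]
  by (intro sum_mono) (rule binomial_diff_le)

lemma sum_num_ksets_on_subsets_pred:
  fixes x :: "nat \<Rightarrow> 'a::euclidean_space"
  assumes "DIM('a) < n"
  shows "(\<Sum>S\<in>{S. S \<subseteq> {..<n} \<and> card S = n - 1}. num_ksets_on 0 S x)
       = (n - DIM('a)) * num_ksets 0 n x + num_ksets 1 n x"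
proof -
  let ?c = "\<lambda>h. card {j\<in>{..<n}. x j \<in> h}"
  have "(\<Sum>S\<in>{S. S \<subseteq> {..<n} \<and> card S = n - 1}. num_ksets_on 0 S x)
      = (\<Sum>I\<in>{I. spanning_dsubset x n I}. \<Sum>h\<in>open_halfspaces_through x I.
          (n - DIM('a) - ?c h) choose (n - DIM('a) - 1))"
    using assms by (simp add: sum_num_ksets_on_subsets)
  also have "\<dots> = (\<Sum>I\<in>{I. spanning_dsubset x n I}. \<Sum>h\<in>open_halfspaces_through x I.
      (n - DIM('a)) * (if ?c h = 0 then 1 else 0) + (if ?c h = 1 then 1 else 0))"
    using assms card_halfspace_le by (intro sum.cong refl binomial_diff_pred) fastforce+
  also have "\<dots> = (n - DIM('a)) * num_ksets 0 n x + num_ksets 1 n x"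
    by (simp only: num_ksets_eq_sum_halfspaces sum_distrib_left sum.distrib)
  finally show ?thesis .
qed

section \<open>Expected numbers of k-sets\<close>

lemma
  fixes P :: "'a::euclidean_space measure"
  assumes P: "prob_space P" "sets P = sets borel" and S: "S \<subseteq> {..<n}" "card S = r"
  shows integrable_num_ksets_on: "integrable (PiM {..<n} (\<lambda>_. P)) (\<lambda>x. real (num_ksets_on k S x))"
    and integral_num_ksets_on: "(\<integral>x. real (num_ksets_on k S x) \<partial>PiM {..<n} (\<lambda>_. P)) = expected_ksets P k r"
proof -
  obtain \<sigma> where "bij_betw \<sigma> {..<r} S"
    using ex_bij_betw_nat_finite[of S] S finite_subset by (auto simp: atLeast0LessThan)
  then have inj: "inj_on \<sigma> {..<r}" and img: "\<sigma> ` {..<r} = S"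
    by (auto simp: bij_betw_def)
  then have \<sigma>_in: "\<sigma> i \<in> {..<n}" if "i \<in> {..<r}" for i
    using S(1) that by blast
  define t where "t x = (\<lambda>i\<in>{..<r}. x (\<sigma> i))" for x :: "nat \<Rightarrow> 'a"
  have t: "t \<in> measurable (PiM {..<n} (\<lambda>_. P)) (PiM {..<r} (\<lambda>_. P))"
    unfolding t_def by (intro measurable_restrict measurable_component_singleton \<sigma>_in)
  have num_t: "num_ksets_on k S x = num_ksets k r (t x)" for x
    using num_ksets_on_reindex[OF inj img, of "t x" x k] by (simp add: t_def num_ksets_eq_num_ksets_on)
  have distr_t: "distr (PiM {..<n} (\<lambda>_. P)) (PiM {..<r} (\<lambda>_. P)) t = PiM {..<r} (\<lambda>_. P)"
    using distr_PiM_reindex[of "{..<n}" "\<lambda>_. P" \<sigma> "{..<r}"] P(1) inj \<sigma>_in unfolding t_def by auto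
  show "integrable (PiM {..<n} (\<lambda>_. P)) (\<lambda>x. real (num_ksets_on k S x))"
    using integrable_num_ksets[OF P, of r k] integrable_distr_eq[OF t] borel_measurable_num_ksets[OF P(2)]
    unfolding num_t distr_t by blast
  show "(\<integral>x. real (num_ksets_on k S x) \<partial>PiM {..<n} (\<lambda>_. P)) = expected_ksets P k r"
    unfolding expected_ksets_def num_t
    using integral_distr[OF t borel_measurable_num_ksets[OF P(2)], of k] distr_t by simp
qed

lemma
  fixes P :: "'a::euclidean_space measure"
  assumes "prob_space P" "sets P = sets borel"
  shows integrable_sum_num_ksets_on_subsets:
      "integrable (PiM {..<n} (\<lambda>_. P)) (\<lambda>x. real (\<Sum>S\<in>{S. S \<subseteq> {..<n} \<and> card S = r}. num_ksets_on k S x))"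
    and integral_sum_num_ksets_on_subsets:
      "(\<integral>x. real (\<Sum>S\<in>{S. S \<subseteq> {..<n} \<and> card S = r}. num_ksets_on k S x) \<partial>PiM {..<n} (\<lambda>_. P))
         = real (n choose r) * expected_ksets P k r"
proof -
  let ?SS = "{S. S \<subseteq> {..<n} \<and> card S = r}"
  show "integrable (PiM {..<n} (\<lambda>_. P)) (\<lambda>x. real (\<Sum>S\<in>?SS. num_ksets_on k S x))"
    unfolding of_nat_sum using integrable_num_ksets_on[OF assms] by auto
  have "(\<integral>x. real (\<Sum>S\<in>?SS. num_ksets_on k S x) \<partial>PiM {..<n} (\<lambda>_. P)) = (\<Sum>S\<in>?SS. expected_ksets P k r)"
    unfolding of_nat_sum using integrable_num_ksets_on[OF assms] integral_num_ksets_on[OF assms]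
    by (simp add: Bochner_Integration.integral_sum)
  also have "\<dots> = real (n choose r) * expected_ksets P k r"
    using n_subsets[of "{..<n}" r] by simp
  finally show "(\<integral>x. real (\<Sum>S\<in>?SS. num_ksets_on k S x) \<partial>PiM {..<n} (\<lambda>_. P)) = real (n choose r) * expected_ksets P k r" .
qed

lemma integral_num_ksets_0_1:
  fixes P :: "'a::euclidean_space measure"
  assumes "prob_space P" "sets P = sets borel"
  shows "(\<integral>x. A * real (num_ksets 0 n x) + B * real (num_ksets 1 n x) \<partial>PiM {..<n} (\<lambda>_. P))
          = A * expected_ksets P 0 n + B * expected_ksets P 1 n"
  using integrable_num_ksets[OF assms] by (simp add: expected_ksets_def)

lemma expected_ksets_subsets_ge:
  fixes P :: "'a::euclidean_space measure"
  assumes P: "prob_space P" "sets P = sets borel" and r: "DIM('a) \<le> r"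
  shows "real ((n - DIM('a)) choose (r - DIM('a))) * expected_ksets P 0 n
       + real ((n - DIM('a) - 1) choose (r - DIM('a))) * expected_ksets P 1 n
       \<le> real (n choose r) * expected_ksets P 0 r"
proof -
  let ?A = "real ((n - DIM('a)) choose (r - DIM('a)))" and ?B = "real ((n - DIM('a) - 1) choose (r - DIM('a)))"
  have "?A * expected_ksets P 0 n + ?B * expected_ksets P 1 n
      = (\<integral>x. ?A * real (num_ksets 0 n x) + ?B * real (num_ksets 1 n x) \<partial>PiM {..<n} (\<lambda>_. P))"
    by (rule integral_num_ksets_0_1[OF P, symmetric])
  also have "\<dots> \<le> (\<integral>x. real (\<Sum>S\<in>{S. S \<subseteq> {..<n} \<and> card S = r}. num_ksets_on 0 S x) \<partial>PiM {..<n} (\<lambda>_. P))"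
  proof (rule integral_mono)
    show "integrable (PiM {..<n} (\<lambda>_. P)) (\<lambda>x. ?A * real (num_ksets 0 n x) + ?B * real (num_ksets 1 n x))"
      by (intro Bochner_Integration.integrable_add integrable_mult_right integrable_num_ksets[OF P])
    show "?A * real (num_ksets 0 n x) + ?B * real (num_ksets 1 n x)
        \<le> real (\<Sum>S\<in>{S. S \<subseteq> {..<n} \<and> card S = r}. num_ksets_on 0 S x)" for x :: "nat \<Rightarrow> 'a"
      using of_nat_mono[OF sum_num_ksets_on_subsets_ge[OF r, of n x], where 'a = real] by simp
  qed (rule integrable_sum_num_ksets_on_subsets[OF P])
  also have "\<dots> = real (n choose r) * expected_ksets P 0 r"
    by (rule integral_sum_num_ksets_on_subsets[OF P])
  finally show ?thesis .
qed

lemma expected_ksets_pred: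
  fixes P :: "'a::euclidean_space measure"
  assumes P: "prob_space P" "sets P = sets borel" and n: "DIM('a) < n"
  shows "real n * expected_ksets P 0 (n - 1) = real (n - DIM('a)) * expected_ksets P 0 n + expected_ksets P 1 n"
proof -
  have "real n * expected_ksets P 0 (n - 1)
      = (\<integral>x. real (\<Sum>S\<in>{S. S \<subseteq> {..<n} \<and> card S = n - 1}. num_ksets_on 0 S x) \<partial>PiM {..<n} (\<lambda>_. P))"
    using integral_sum_num_ksets_on_subsets[OF P] binomial_symmetric[of "n - 1" n] n by simp
  also have "\<dots> = (\<integral>x. real (n - DIM('a)) * real (num_ksets 0 n x) + 1 * real (num_ksets 1 n x) \<partial>PiM {..<n} (\<lambda>_. P))"
    by (intro Bochner_Integration.integral_cong refl)
      (simp only: sum_num_ksets_on_subsets_pred[OF n] of_nat_add of_nat_mult mult_1)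
  also have "\<dots> = real (n - DIM('a)) * expected_ksets P 0 n + 1 * expected_ksets P 1 n"
    by (rule integral_num_ksets_0_1[OF P])
  finally show ?thesis
    by simp
qed

lemma expected_ksets_eq_0:
  fixes P :: "'a::euclidean_space measure"
  assumes "m < DIM('a)"
  shows "expected_ksets P k m = 0"
proof -
  have "\<not> spanning_dsubset x m I" for x :: "nat \<Rightarrow> 'a" and I
    using assms card_mono[of "{..<m}" I] by (auto simp: spanning_dsubset_def)
  then show ?thesis
    by (simp add: expected_ksets_def num_ksets_def)
qed

lemma expected_ksets_nonneg: "0 \<le> expected_ksets P k m"
  unfolding expected_ksets_def by (rule integral_nonneg_AE) simp

lemma ibinom_le_binomial: "ibinom a b \<le> nat a choose nat b"
  by (simp add: ibinom_def)

lemma ibinom_of_nat: "ibinom (int a) (int b) = a choose b"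
  by (simp add: ibinom_def)

lemma expected_ksets_recurrence:
  fixes P :: "'a::euclidean_space measure"
  assumes P: "prob_space P" "sets P = sets borel" and n: "n > 0"
  shows "expected_ksets P 0 n \<ge> expected_ksets P 0 (n - 1)
           + (real DIM('a) * expected_ksets P 0 n - expected_ksets P 1 n) / real n"
proof -
  consider "DIM('a) < n" | "DIM('a) = n" | "n < DIM('a)"
    by linarith
  then show ?thesis
  proof cases
    case 1
    then show ?thesis
      using expected_ksets_pred[OF P 1] n by (simp add: field_simps of_nat_diff)
  next
    case 2
    then show ?thesis
      using expected_ksets_eq_0[of "n - 1" P 0] expected_ksets_nonneg[of P 1 n] n
      by (simp add: field_simps)
  next
    case 3
    then show ?thesis
      by (simp add: expected_ksets_eq_0)
  qed
qed

lemma expected_ksets_lower_bound: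
  fixes P :: "'a::euclidean_space measure"
  assumes P: "prob_space P" "sets P = sets borel" and r: "1 \<le> r" "r \<le> n"
  shows "expected_ksets P 0 r \<ge>
           real (ibinom (int n - int DIM('a)) (int r - int DIM('a))) / real (n choose r) * expected_ksets P 0 n
         + real (ibinom (int n - int DIM('a) - 1) (int r - int DIM('a))) / real (n choose r) * expected_ksets P 1 n"
proof (cases "DIM('a) \<le> r")
  case True
  let ?C = "real (n choose r)"
  have C: "?C > 0"
    using r by simp
  have A: "ibinom (int n - int DIM('a)) (int r - int DIM('a)) = (n - DIM('a)) choose (r - DIM('a))"
    using True r ibinom_of_nat[of "n - DIM('a)" "r - DIM('a)"] by (simp add: of_nat_diff)
  have B: "ibinom (int n - int DIM('a) - 1) (int r - int DIM('a)) \<le> (n - DIM('a) - 1) choose (r - DIM('a))"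
  proof -
    have "nat (int n - int DIM('a) - 1) = n - DIM('a) - 1" "nat (int r - int DIM('a)) = r - DIM('a)"
      by auto
    then show ?thesis
      using ibinom_le_binomial[of "int n - int DIM('a) - 1" "int r - int DIM('a)"] by simp
  qed
  have "real (ibinom (int n - int DIM('a)) (int r - int DIM('a))) / ?C * expected_ksets P 0 n
      + real (ibinom (int n - int DIM('a) - 1) (int r - int DIM('a))) / ?C * expected_ksets P 1 n
      \<le> (real ((n - DIM('a)) choose (r - DIM('a))) * expected_ksets P 0 n
         + real ((n - DIM('a) - 1) choose (r - DIM('a))) * expected_ksets P 1 n) / ?C"
    using B C expected_ksets_nonneg[of P 1 n]
    by (simp add: A add_divide_distrib divide_right_mono mult_right_mono)
  also have "\<dots> \<le> expected_ksets P 0 r"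
    using expected_ksets_subsets_ge[OF P True, of n] C by (simp add: divide_le_eq mult.commute)
  finally show ?thesis .
next
  case False
  then show ?thesis
    by (simp add: expected_ksets_eq_0 ibinom_def)
qed

theorem lemma3:
  fixes P :: "'a::euclidean_space measure"
  assumes "prob_space P"
    and "sets P = sets borel"
    and "AE x in PiM {..<DIM('a)} (\<lambda>_. P).
           inj_on x {..<DIM('a)} \<and> \<not> affine_dependent (x ` {..<DIM('a)})"
  shows "(\<forall>n::nat. n > 0 \<longrightarrow>
            expected_ksets P 0 n \<ge> expected_ksets P 0 (n - 1)
              + (real DIM('a) * expected_ksets P 0 n - expected_ksets P 1 n) / real n)
       \<and> (\<forall>n r::nat. 1 \<le> r \<and> r \<le> n \<longrightarrow>
            expected_ksets P 0 r \<ge>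
              real (ibinom (int n - int DIM('a)) (int r - int DIM('a))) / real (n choose r)
                * expected_ksets P 0 n
              + real (ibinom (int n - int DIM('a) - 1) (int r - int DIM('a))) / real (n choose r)
                * expected_ksets P 1 n)"
  using expected_ksets_recurrence[OF assms(1,2)] expected_ksets_lower_bound[OF assms(1,2)] by blast

end
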